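(* Let $I\subseteq\mathbb{R}_+$ be a nonempty, non-singleton interval and let $n\in\mathbb{N}$. If $\Phi: I\to\mathbb{R}_+$ is subadditive of order $n$, then $\Phi$ is also subadditive of order $n+1$.
   Context: $\mathbb{R}_+$ denotes the set of nonnegative real numbers. For $n\in\mathbb{N}$, a function $\Phi: I\to\mathbb{R}_+$ is called subadditive of order $n$ if for all $x,y\in I$ with $y>0$ and $x+y\in I$ one has $\Phi(x+y)\leq \Phi(x)+\frac{(x+y)^n-x^n}{y^n}\Phi(y)$. *)

theory Defs
  imports "HOL-Analysis.Analysis"
begin

definition subadditive_order :: "nat \<Rightarrow> real set \<Rightarrow> (real \<Rightarrow> real) \<Rightarrow> bool" where
  "subadditive_order n I \<Phi> \<longleftrightarrow>
     (\<forall>x\<in>I. \<forall>y\<in>I. y > 0 \<longrightarrow> x + y \<in> I \<longrightarrow>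
        \<Phi> (x + y) \<le> \<Phi> x + ((x + y) ^ n - x ^ n) / y ^ n * \<Phi> y)"

end

theory Submission
  imports Defs
begin

text \<open>Since \<open>(x + y)^(n+1) - x^(n+1) = (x + y)((x + y)^n - x^n) + y x^n \<ge> y((x + y)^n - x^n)\<close>
  for \<open>x \<ge> 0 < y\<close>, the coefficient of \<open>\<Phi> y\<close> in the defining inequality can only grow
  when the order increases; as \<open>\<Phi> y \<ge> 0\<close>, the inequality of order \<open>n\<close> implies that of
  order \<open>n + 1\<close>.\<close>

lemma power_diff_div_power_le_Suc:
  fixes x y :: "'a::linordered_field"
  assumes "0 \<le> x" "0 < y"
  shows "((x + y) ^ n - x ^ n) / y ^ n \<le> ((x + y) ^ Suc n - x ^ Suc n) / y ^ Suc n"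
proof -
  have "x ^ n \<le> (x + y) ^ n"
    using assms by (intro power_mono) auto
  then have "0 \<le> x * ((x + y) ^ n - x ^ n) + y * x ^ n"
    using assms by simp
  also have "x * ((x + y) ^ n - x ^ n) + y * x ^ n
      = ((x + y) ^ Suc n - x ^ Suc n) - y * ((x + y) ^ n - x ^ n)"
    by (simp add: algebra_simps)
  finally have "y * ((x + y) ^ n - x ^ n) \<le> (x + y) ^ Suc n - x ^ Suc n"
    by simp
  then have "y * ((x + y) ^ n - x ^ n) / y ^ Suc n \<le> ((x + y) ^ Suc n - x ^ Suc n) / y ^ Suc n"
    using assms by (intro divide_right_mono) auto
  also have "y * ((x + y) ^ n - x ^ n) / y ^ Suc n = ((x + y) ^ n - x ^ n) / y ^ n"
    using assms by simp
  finally show ?thesis .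
qed

lemma subadditive_order_Suc:
  assumes "I \<subseteq> {0..}" and "\<forall>x\<in>I. \<Phi> x \<ge> 0" and "subadditive_order n I \<Phi>"
  shows "subadditive_order (Suc n) I \<Phi>"
  unfolding subadditive_order_def
proof (intro ballI impI)
  fix x y
  assume "x \<in> I" "y \<in> I" "y > 0" "x + y \<in> I"
  then have "\<Phi> (x + y) \<le> \<Phi> x + ((x + y) ^ n - x ^ n) / y ^ n * \<Phi> y"
    using assms(3) unfolding subadditive_order_def by blast
  also have "\<dots> \<le> \<Phi> x + ((x + y) ^ Suc n - x ^ Suc n) / y ^ Suc n * \<Phi> y"
    using power_diff_div_power_le_Suc[of x y n] assms(1,2) \<open>x \<in> I\<close> \<open>y \<in> I\<close> \<open>y > 0\<close>
    by (intro add_left_mono mult_right_mono) auto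
  finally show "\<Phi> (x + y) \<le> \<Phi> x + ((x + y) ^ Suc n - x ^ Suc n) / y ^ Suc n * \<Phi> y" .
qed

theorem theorem2p1:
  fixes I :: "real set" and n :: nat and \<Phi> :: "real \<Rightarrow> real"
  assumes "is_interval I" and "I \<subseteq> {0..}" and "I \<noteq> {}" and "\<not> (\<exists>a. I = {a})"
    and "n \<ge> 1"
    and "\<forall>x\<in>I. \<Phi> x \<ge> 0"
    and "subadditive_order n I \<Phi>"
  shows "subadditive_order (n + 1) I \<Phi>"
  using subadditive_order_Suc[OF assms(2,6,7)] by simp

end
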